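(* Let $p=p_n\in(0,1)$ with $f_n:=n p_n\to 0$, and let $G\sim\mathcal{G}(n,p_n)$ with $m$ its number of edges. Let $\phi(\delta)=(1+\delta)\ln(1+\delta)-\delta$, $\delta_n=\phi^{-1}(2\ln 2/f_n)$ and $C_n=\left(1+(1+\delta_n)\frac{n-1}{n}f_n\right)^{-1}$. For $1\le u\le n$ define $$w_n(u)=\sum_{i=n-u}^{n}\binom{i}{i-(n-u)}(1-p_n)^{\binom{i-(n-u)}{2}}\,\mathbb{P}\left(m\ge\frac{n^2}{2u}-\frac{n}{2}\right),$$ and $\mathbb{T}^2(n,p)=\sum_{nC_n\le u\le n}w_n(u)$. Then $\mathbb{T}^2(n,p)$ has subexponential growth in $n$. Furthermore, there exist a constant $h>0$ and a sequence $\gamma_n$ of at most polynomial growth such that $$\mathbb{T}^2(n,p)\le\gamma_n\exp\left(h\cdot n\cdot\left(\ln\frac{1}{f_n}\right)^{-1}\ln\left(\ln\frac{1}{f_n}\right)\right).$$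
   Context: $\mathcal{G}(n,p)$ is the binomial random graph on $n$ vertices in which each of the $\binom{n}{2}$ pairs of vertices is an edge with probability $p$, independently. $\phi$ is increasing on $[0,\infty)$, so $\phi^{-1}$ is well defined. The quantity $w_n(u)$ is the paper's bound on the expected number of nodes with potential $u$ in the best-first branch-and-bound search tree for maximum independent set (potential of a partial solution $S\subseteq\{v_1,\dots,v_i\}$ being $|S|+n-i$). *)

theory Defs
  imports "HOL-Probability.Probability"
begin

definition phi :: "real \<Rightarrow> real" where
  "phi \<delta> = (1 + \<delta>) * ln (1 + \<delta>) - \<delta>"

text \<open>Inverse of phi on [0,infinity) (phi is increasing there, phi 0 = 0, phi tends to infinity).\<close>
definition phi_inv :: "real \<Rightarrow> real" where
  "phi_inv y = (THE \<delta>. \<delta> \<ge> 0 \<and> phi \<delta> = y)"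

definition fseq :: "(nat \<Rightarrow> real) \<Rightarrow> nat \<Rightarrow> real" where
  "fseq p n = real n * p n"

definition delta_seq :: "(nat \<Rightarrow> real) \<Rightarrow> nat \<Rightarrow> real" where
  "delta_seq p n = phi_inv (2 * ln 2 / fseq p n)"

definition C_seq :: "(nat \<Rightarrow> real) \<Rightarrow> nat \<Rightarrow> real" where
  "C_seq p n = inverse (1 + (1 + delta_seq p n) * ((real n - 1) / real n) * fseq p n)"

text \<open>P(m \<ge> x) where m, the number of edges of G(n,q), is Binomial(n choose 2, q).\<close>
definition edge_tail :: "nat \<Rightarrow> real \<Rightarrow> real \<Rightarrow> real" where
  "edge_tail n q x = measure_pmf.prob (binomial_pmf (n choose 2) q) {k. real k \<ge> x}"

definition w_n :: "(nat \<Rightarrow> real) \<Rightarrow> nat \<Rightarrow> nat \<Rightarrow> real" where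
  "w_n p n u = (\<Sum>i = n - u..n. real (i choose (i - (n - u)))
        * (1 - p n) ^ ((i - (n - u)) choose 2)
        * edge_tail n (p n) (real n ^ 2 / (2 * real u) - real n / 2))"

definition T2 :: "(nat \<Rightarrow> real) \<Rightarrow> nat \<Rightarrow> real" where
  "T2 p n = (\<Sum>u \<in> {u. 1 \<le> u \<and> u \<le> n \<and> real n * C_seq p n \<le> real u}. w_n p n u)"

end

theory Submission
  imports Defs "HOL-Real_Asymp.Real_Asymp"
begin

text \<open>Every summand of \<open>w\<^sub>n(u)\<close> is at most \<open>binom(i, n - u) \<le> binom(n, n - u)\<close>, since the factor
  \<open>(1 - p)^\<dots>\<close> and the tail probability are at most 1. For \<open>u \<ge> n C\<^sub>n\<close> we have
  \<open>n - u \<le> (1 - C\<^sub>n) n \<le> (1 + \<delta>\<^sub>n) f\<^sub>n n\<close>, and because \<open>\<phi>(\<delta>)\<close> grows like \<open>\<delta> ln \<delta>\<close>,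
  \<open>(1 + \<delta>\<^sub>n) f\<^sub>n \<le> 8 / L\<^sub>n\<close> with \<open>L\<^sub>n = ln (1 / f\<^sub>n)\<close>. The entropy bound
  \<open>binom(n, \<epsilon> n) \<le> (e / \<epsilon>)^(\<epsilon> n)\<close> with \<open>\<epsilon> = 8 / L\<^sub>n\<close> and the at most \<open>(n + 1)\<^sup>2\<close> summands give
  the second claim with \<open>h = 8\<close>; it implies the first because \<open>L\<^sub>n \<rightarrow> \<infinity>\<close> and \<open>ln L / L \<rightarrow> 0\<close>.\<close>

lemma phi_has_real_derivative: "x > -1 \<Longrightarrow> (phi has_real_derivative ln (1 + x)) (at x)"
  unfolding phi_def [abs_def]
  by (auto intro!: derivative_eq_intros simp: field_simps)

lemma isCont_phi: "x > -1 \<Longrightarrow> isCont phi x"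
  using phi_has_real_derivative by (rule DERIV_isCont)

lemma phi_strict_mono_on: "strict_mono_on {0..} phi"
proof (rule strict_mono_onI)
  fix a b :: real assume ab: "a \<in> {0..}" "b \<in> {0..}" "a < b"
  show "phi a < phi b"
  proof (rule DERIV_pos_imp_increasing_open[OF \<open>a < b\<close>])
    fix x assume "a < x" "x < b"
    with ab have "0 < x" by auto
    then show "\<exists>y. (phi has_real_derivative y) (at x) \<and> 0 < y"
      using phi_has_real_derivative[of x] by (intro exI[of _ "ln (1 + x)"]) auto
  next
    show "continuous_on {a..b} phi"
      using ab isCont_phi by (intro continuous_at_imp_continuous_on) auto
  qed
qed

lemma phi_inv_phi:
  assumes "0 \<le> x" shows "phi_inv (phi x) = x"
  unfolding phi_inv_def
proof (rule the_equality)
  fix \<delta> assume "0 \<le> \<delta> \<and> phi \<delta> = phi x"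
  then show "\<delta> = x" using strict_mono_on_eqD[OF phi_strict_mono_on, of x \<delta>] assms by auto
qed (use assms in auto)

lemma phi_inv_le:
  assumes "0 \<le> y" "0 \<le> D" "y \<le> phi D"
  shows "0 \<le> phi_inv y \<and> phi_inv y \<le> D"
proof -
  have "phi 0 \<le> y" using assms(1) by (simp add: phi_def)
  moreover have "\<forall>x. 0 \<le> x \<and> x \<le> D \<longrightarrow> isCont phi x"
    using isCont_phi by force
  ultimately obtain x where x: "0 \<le> x" "x \<le> D" "phi x = y"
    using IVT[of phi 0 y D] assms(2,3) by blast
  then have "phi_inv y = x" using phi_inv_phi by blast
  with x show ?thesis by simp
qed

lemma ln_le_half_self: "0 < (t::real) \<Longrightarrow> ln t \<le> t / 2"
proof -
  assume t: "0 < t"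
  have "ln t = 2 * ln (sqrt t)" using t by (simp add: ln_sqrt)
  also have "\<dots> \<le> 2 * (sqrt t - 1)" using t ln_le_minus_one[of "sqrt t"] by simp
  also have "\<dots> \<le> t / 2"
  proof -
    have "0 \<le> (sqrt t - 2) ^ 2" by simp
    then show ?thesis using t by (simp add: power2_eq_square algebra_simps)
  qed
  finally show ?thesis .
qed

lemma one_le_ln_4: "1 \<le> ln (4::real)"
proof -
  have "exp 1 \<le> (4::real)" using exp_le by simp
  then show ?thesis by (simp add: ln_ge_iff)
qed

text \<open>Witness \<open>A = 4y / ln y\<close>: \<open>\<phi>(A - 1) \<ge> A (ln A - 1) \<ge> A ln y / 2 = 2y\<close>, using \<open>ln ln y \<le> ln y / 2\<close>.\<close>
lemma phi_inv_le_div_ln: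
  fixes y :: real
  assumes "1 < y"
  shows "0 \<le> phi_inv y \<and> 1 + phi_inv y \<le> 4 * y / ln y"
proof -
  define A where "A = 4 * y / ln y"
  have lny: "0 < ln y" using assms by simp
  have "ln y \<le> y - 1" using ln_le_minus_one assms by simp
  then have A: "1 \<le> A" unfolding A_def using lny assms by (simp add: field_simps)
  have "ln A = ln 4 + ln y - ln (ln y)"
    unfolding A_def using assms lny by (simp add: ln_div ln_mult)
  with ln_le_half_self[OF lny] one_le_ln_4 have "ln y / 2 \<le> ln A - 1" by simp
  then have "A * (ln y / 2) \<le> A * (ln A - 1)" using A by simp
  also have "\<dots> \<le> phi (A - 1)" by (simp add: phi_def algebra_simps)
  finally have "2 * y \<le> phi (A - 1)" unfolding A_def using lny by simp
  then have "y \<le> phi (A - 1)" using assms by linarith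
  with phi_inv_le[of y "A - 1"] A assms show ?thesis unfolding A_def by simp
qed

lemma phi_inv_mult_le:
  fixes f :: real
  assumes "0 < f" "f < 1"
  shows "0 \<le> phi_inv (2 * ln 2 / f) \<and> (1 + phi_inv (2 * ln 2 / f)) * f \<le> 8 / ln (1 / f)"
proof -
  define y where "y = 2 * ln 2 / f"
  have L: "0 < ln (1 / f)" using assms by simp
  have "ln (4::real) = 2 * ln 2" using ln_realpow[of 2 2] by simp
  then have "0 \<le> ln (2 * ln (2::real))" using one_le_ln_4 by simp
  moreover have "ln y = ln (2 * ln 2) + ln (1 / f)"
    unfolding y_def using assms by (simp add: ln_div ln_mult)
  ultimately have lny: "ln (1 / f) \<le> ln y" by simp
  have "0 < y" unfolding y_def using assms by simp
  with lny L have "1 < y" using ln_gt_zero_imp_gt_one[of y] by linarith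
  note bound = phi_inv_le_div_ln[OF this]
  have "(1 + phi_inv y) * f \<le> 4 * y / ln y * f"
    using bound assms by (intro mult_right_mono) auto
  also have "\<dots> = 8 * ln 2 / ln y" unfolding y_def using assms by simp
  also have "\<dots> \<le> 8 / ln y" using ln_2_less_1 L lny by (simp add: divide_right_mono)
  also have "\<dots> \<le> 8 / ln (1 / f)" using lny L by (simp add: frac_le)
  finally show ?thesis using bound unfolding y_def by simp
qed

lemma binomial_le_exp:
  fixes e :: real
  assumes e: "0 < e" "e \<le> 1" and k: "real k \<le> e * real n"
  shows "real (n choose k) \<le> exp (e * real n * (1 + ln (1 / e)))"
proof (cases "k \<le> n")
  case False
  then show ?thesis by (simp add: binomial_eq_0)
next
  case True
  have "real (n choose k) * e ^ k * 1 ^ (n - k) \<le> (\<Sum>j\<le>n. real (n choose j) * e ^ j * 1 ^ (n - j))"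
    using True e by (intro member_le_sum) auto
  also have "\<dots> = (e + 1) ^ n" by (rule binomial_ring[symmetric])
  also have "\<dots> \<le> exp e ^ n"
    using e by (intro power_mono) (auto simp: add.commute intro: exp_ge_add_one_self_aux)
  also have "\<dots> = exp (e * n)" by (simp add: exp_of_nat_mult[symmetric] mult.commute)
  finally have binom: "real (n choose k) * e ^ k \<le> exp (e * n)" by simp
  have "e powr (e * n) \<le> e powr (real k)" using e k by (intro powr_mono') auto
  also have "\<dots> = e ^ k" using e by (simp add: powr_realpow)
  finally have "real (n choose k) * e powr (e * n) \<le> real (n choose k) * e ^ k"
    by (intro mult_left_mono) auto
  with binom have "real (n choose k) * e powr (e * n) \<le> exp (e * n)" by linarith
  then have "real (n choose k) \<le> exp (e * n) / e powr (e * n)"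
    using e by (simp add: field_simps)
  also have "\<dots> = exp (e * real n * (1 + ln (1 / e)))"
    using e by (simp add: powr_def exp_diff ln_div algebra_simps)
  finally show ?thesis .
qed

lemma n_minus_n_C_seq_le:
  assumes "1 \<le> n" "0 \<le> fseq p n" "0 \<le> delta_seq p n"
  shows "real n - real n * C_seq p n \<le> (1 + delta_seq p n) * fseq p n * real n"
proof -
  define a where "a = (1 + delta_seq p n) * ((real n - 1) / real n) * fseq p n"
  have a: "0 \<le> a" unfolding a_def using assms by auto
  have "a = (real n - 1) / real n * ((1 + delta_seq p n) * fseq p n)"
    unfolding a_def by simp
  also have "\<dots> \<le> (1 + delta_seq p n) * fseq p n"
    using assms by (intro mult_left_le_one_le) auto
  finally have a_le: "a \<le> (1 + delta_seq p n) * fseq p n" .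
  have "real n - real n * C_seq p n = real n * (a / (1 + a))"
    unfolding C_seq_def a_def[symmetric] using a by (simp add: field_simps)
  also have "\<dots> \<le> real n * a"
    using a by (intro mult_left_mono) (simp_all add: divide_le_eq algebra_simps)
  also have "\<dots> \<le> real n * ((1 + delta_seq p n) * fseq p n)"
    using a_le by (intro mult_left_mono) auto
  finally show ?thesis by (simp add: mult.commute)
qed

lemma w_n_le_binomial:
  assumes "u \<le> n" "0 \<le> p n" "p n \<le> 1"
  shows "w_n p n u \<le> (real n + 1) * real (n choose (n - u))"
proof -
  have "real (i choose (i - (n - u))) * (1 - p n) ^ ((i - (n - u)) choose 2)
          * edge_tail n (p n) (real n ^ 2 / (2 * real u) - real n / 2)
        \<le> real (n choose (n - u))" if i: "i \<in> {n - u..n}" for i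
  proof -
    have "real (i choose (i - (n - u))) * (1 - p n) ^ ((i - (n - u)) choose 2)
            * edge_tail n (p n) (real n ^ 2 / (2 * real u) - real n / 2)
          \<le> real (i choose (i - (n - u))) * 1 * 1"
      using assms unfolding edge_tail_def by (intro mult_mono power_le_one) auto
    also have "\<dots> = real (i choose (n - u))"
      using i binomial_symmetric[of "n - u" i] by auto
    also have "\<dots> \<le> real (n choose (n - u))" using i by (simp add: binomial_right_mono)
    finally show ?thesis .
  qed
  then have "w_n p n u \<le> real (card {n - u..n}) * real (n choose (n - u))"
    unfolding w_n_def by (rule sum_bounded_above)
  also have "\<dots> \<le> (real n + 1) * real (n choose (n - u))"
    using assms by (intro mult_right_mono) auto
  finally show ?thesis .
qed

lemma T2_le:
  assumes n: "1 \<le> n" and p: "0 < p n" "p n < 1" and large: "8 \<le> ln (1 / fseq p n)"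
  shows "T2 p n \<le> (real n + 1) ^ 2
    * exp (8 * real n * inverse (ln (1 / fseq p n)) * ln (ln (1 / fseq p n)))"
proof -
  define L where "L = ln (1 / fseq p n)"
  define e where "e = 8 / L"
  define B where "B = exp (8 * real n * inverse L * ln L)"
  have f0: "0 < fseq p n" using n p by (simp add: fseq_def)
  with large have "1 < 1 / fseq p n" by (simp flip: ln_gt_zero_iff)
  with f0 have f: "0 < fseq p n" "fseq p n < 1" by (simp_all add: field_simps)
  have L8: "8 \<le> L" unfolding L_def by (fact large)
  then have e: "0 < e" "e \<le> 1" unfolding e_def by auto
  have \<delta>: "0 \<le> delta_seq p n" "(1 + delta_seq p n) * fseq p n \<le> e"
    using phi_inv_mult_le[OF f] unfolding delta_seq_def e_def L_def by auto
  have "ln (1 / e) = ln L - ln 8" using L8 by (simp add: e_def ln_div)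
  moreover have "ln 4 \<le> ln (8::real)" by simp
  ultimately have "1 + ln (1 / e) \<le> ln L" using one_le_ln_4 by linarith
  then have "e * real n * (1 + ln (1 / e)) \<le> e * real n * ln L"
    using e by (intro mult_left_mono) auto
  also have "\<dots> = 8 * real n * inverse L * ln L" by (simp add: e_def divide_inverse)
  finally have exponent: "exp (e * real n * (1 + ln (1 / e))) \<le> B" by (simp add: B_def)
  have "real n - real n * C_seq p n \<le> (1 + delta_seq p n) * fseq p n * real n"
    using n f \<delta>(1) by (intro n_minus_n_C_seq_le) auto
  also have "\<dots> \<le> e * real n" using \<delta>(2) by (intro mult_right_mono) auto
  finally have gap: "real n - real n * C_seq p n \<le> e * real n" .
  have w: "w_n p n u \<le> (real n + 1) * B"
    if u: "u \<le> n" "real n * C_seq p n \<le> real u" for u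
  proof -
    have "real (n choose (n - u)) \<le> exp (e * real n * (1 + ln (1 / e)))"
      using gap u by (intro binomial_le_exp[OF e]) (simp add: of_nat_diff)
    with exponent have "real (n choose (n - u)) \<le> B" by linarith
    then have "(real n + 1) * real (n choose (n - u)) \<le> (real n + 1) * B"
      by (intro mult_left_mono) auto
    with w_n_le_binomial[of u n p] u p show ?thesis by linarith
  qed
  define S where "S = {u. 1 \<le> u \<and> u \<le> n \<and> real n * C_seq p n \<le> real u}"
  have "card S \<le> card {1..n}" unfolding S_def by (intro card_mono) auto
  then have card: "real (card S) \<le> real n + 1" by simp
  have "T2 p n \<le> real (card S) * ((real n + 1) * B)"
    unfolding T2_def S_def[symmetric] by (rule sum_bounded_above) (simp add: S_def w)
  also have "\<dots> \<le> (real n + 1) * ((real n + 1) * B)"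
    using card by (intro mult_right_mono) (auto simp: B_def)
  finally show ?thesis unfolding B_def L_def by (simp add: power2_eq_square)
qed

lemma filterlim_ln_inverse_fseq:
  assumes "\<And>n. 0 < p n" and "(\<lambda>n. real n * p n) \<longlonglongrightarrow> 0"
  shows "filterlim (\<lambda>n. ln (1 / fseq p n)) at_top sequentially"
proof -
  have "\<forall>\<^sub>F n in sequentially. 0 < fseq p n"
    using eventually_ge_at_top[of "1::nat"] by eventually_elim (use assms in \<open>simp add: fseq_def\<close>)
  then have "filterlim (fseq p) (at_right 0) sequentially"
    using assms unfolding fseq_def[abs_def] by (intro tendsto_imp_filterlim_at_right) auto
  then show ?thesis
    by (auto simp: divide_inverse
        intro: filterlim_compose[OF ln_at_top] filterlim_compose[OF filterlim_inverse_at_top_right])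
qed

lemma eventually_poly_exp_ln_div_le_exp:
  fixes L :: "nat \<Rightarrow> real"
  assumes L: "filterlim L at_top sequentially" and "0 < \<epsilon>" "0 \<le> c"
  shows "\<forall>\<^sub>F n in sequentially.
    (real n + 1) ^ k * exp (c * real n * inverse (L n) * ln (L n)) \<le> exp (\<epsilon> * real n)"
proof -
  have "((\<lambda>x::real. ln x / x) \<longlongrightarrow> 0) at_top" by real_asymp
  then have "((\<lambda>n. c * (ln (L n) / L n)) \<longlongrightarrow> 0) sequentially"
    by (rule tendsto_mult_right_zero[OF filterlim_compose[OF _ L]])
  then have exponent: "\<forall>\<^sub>F n in sequentially. c * (ln (L n) / L n) < \<epsilon> / 2"
    using \<open>0 < \<epsilon>\<close> by (intro order_tendstoD(2)) auto
  have "((\<lambda>x::real. (x + 1) ^ k / exp (\<epsilon> / 2 * x)) \<longlongrightarrow> 0) at_top"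
    using \<open>0 < \<epsilon>\<close> by real_asymp
  from filterlim_compose[OF this filterlim_real_sequentially]
  have "\<forall>\<^sub>F n in sequentially. (real n + 1) ^ k / exp (\<epsilon> / 2 * real n) < 1"
    by (intro order_tendstoD(2)) auto
  then show ?thesis using exponent
  proof eventually_elim
    case (elim n)
    have "c * real n * inverse (L n) * ln (L n) = real n * (c * (ln (L n) / L n))"
      by (simp add: divide_inverse)
    also have "\<dots> \<le> real n * (\<epsilon> / 2)" using elim(2) by (intro mult_left_mono) auto
    finally have "exp (c * real n * inverse (L n) * ln (L n)) \<le> exp (\<epsilon> / 2 * real n)"
      by (simp add: mult.commute)
    moreover have "(real n + 1) ^ k \<le> exp (\<epsilon> / 2 * real n)"
      using elim(1) by (simp add: divide_less_eq)
    ultimately have "(real n + 1) ^ k * exp (c * real n * inverse (L n) * ln (L n))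
        \<le> exp (\<epsilon> / 2 * real n) * exp (\<epsilon> / 2 * real n)"
      by (intro mult_mono) auto
    then show ?case by (simp flip: exp_add)
  qed
qed

theorem proposition3:
  fixes p :: "nat \<Rightarrow> real"
  assumes p_range: "\<And>n. 0 < p n \<and> p n < 1"
    and f_lim: "(\<lambda>n. real n * p n) \<longlonglongrightarrow> 0"
  shows "(\<forall>\<epsilon>>0. \<forall>\<^sub>F n in sequentially. T2 p n \<le> exp (\<epsilon> * real n))
    \<and> (\<exists>h>0. \<exists>\<gamma> :: nat \<Rightarrow> real. \<exists>c k. (\<forall>n. \<gamma> n \<le> c * (real n + 1) ^ k)
         \<and> (\<forall>\<^sub>F n in sequentially.
              T2 p n \<le> \<gamma> n * exp (h * real n * inverse (ln (1 / fseq p n))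
                                        * ln (ln (1 / fseq p n)))))"
proof -
  define L where "L n = ln (1 / fseq p n)" for n
  have L: "filterlim L at_top sequentially"
    unfolding L_def using filterlim_ln_inverse_fseq p_range f_lim by blast
  have T2: "\<forall>\<^sub>F n in sequentially.
      T2 p n \<le> (real n + 1) ^ 2 * exp (8 * real n * inverse (L n) * ln (L n))"
    using eventually_ge_at_top[of 1] L[unfolded filterlim_at_top, rule_format, of 8]
    by eventually_elim (use p_range T2_le in \<open>auto simp: L_def\<close>)
  have subexponential: "\<forall>\<^sub>F n in sequentially. T2 p n \<le> exp (\<epsilon> * real n)" if "0 < \<epsilon>" for \<epsilon>
  proof -
    have "\<forall>\<^sub>F n in sequentially.
        (real n + 1) ^ 2 * exp (8 * real n * inverse (L n) * ln (L n)) \<le> exp (\<epsilon> * real n)"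
      by (rule eventually_poly_exp_ln_div_le_exp[OF L that]) simp
    with T2 show ?thesis by eventually_elim (rule order_trans)
  qed
  have "\<exists>\<gamma> :: nat \<Rightarrow> real. \<exists>c k. (\<forall>n. \<gamma> n \<le> c * (real n + 1) ^ k)
      \<and> (\<forall>\<^sub>F n in sequentially.
            T2 p n \<le> \<gamma> n * exp (8 * real n * inverse (ln (1 / fseq p n)) * ln (ln (1 / fseq p n))))"
    using T2 unfolding L_def
    by (intro exI[of _ "\<lambda>n. (real n + 1) ^ 2"] exI[of _ "1::real"] exI[of _ "2::nat"]) simp
  with subexponential show ?thesis by (intro conjI exI[of _ "8::real"]) auto
qed

end
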